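(* For $\kappa\in\mathbb{R}$ and $b>0$ define $$\ell(\kappa;b)=\sum_{n\in\mathbb{Z}}\ \sup_{y\in[0,1]}\ \frac{b}{(y+n+\kappa)^2+b^2}.$$ Then for each $b>0$ the function $\kappa\mapsto\ell(\kappa;b)$ is $\mathbb{Z}$-periodic and $$\sup_{\kappa\in\mathbb{R}}\ell(\kappa;b)\le\pi\Big(1+\frac1b\Big).$$ *)

theory Defs
  imports "HOL-Analysis.Analysis"
begin

definition ell_term :: "real \<Rightarrow> real \<Rightarrow> int \<Rightarrow> real" where
  "ell_term \<kappa> b n = (SUP y\<in>{0..1::real}. b / ((y + real_of_int n + \<kappa>)\<^sup>2 + b\<^sup>2))"

definition ell :: "real \<Rightarrow> real \<Rightarrow> real" where
  "ell \<kappa> b = (\<Sum>\<^sub>\<infinity>n\<in>(UNIV::int set). ell_term \<kappa> b n)"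

end

theory Submission
  imports Defs
begin

(* The unnormalised Poisson kernel b / (x^2 + b^2) is decreasing in |x| and bounded by 1/b, and
   on [k - 1, k] it dominates its value at k; comparing with its antiderivative arctan (x / b),
   its values at 0, 1, 2, ... sum to at most 1/b + pi/2.  For 0 <= kappa < 1 all points
   y + n + kappa with y in [0,1] lie in [n, n + 2], so the n-th supremum is at most the kernel at
   the distance from 0 to [n, n + 2].  These distances are 0, 1, 2, ... for n >= 0, again
   0, 1, 2, ... for n <= -2, and 0 for n = -1, which gives pi + 3/b <= pi (1 + 1/b).  Shifting
   kappa by an integer only reindexes the sum. *)

definition poisson_kernel :: "real \<Rightarrow> real \<Rightarrow> real" where
  "poisson_kernel b x = b / (x\<^sup>2 + b\<^sup>2)"

lemma poisson_kernel_nonneg: "b > 0 \<Longrightarrow> poisson_kernel b x \<ge> 0"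
  unfolding poisson_kernel_def by (simp add: add_nonneg_pos)

lemma poisson_kernel_antimono:
  assumes "b > 0" "\<bar>y\<bar> \<le> \<bar>x\<bar>"
  shows "poisson_kernel b x \<le> poisson_kernel b y"
proof -
  have "y\<^sup>2 \<le> x\<^sup>2"
    using assms(2) by (metis abs_ge_zero power2_abs power_mono)
  then show ?thesis
    unfolding poisson_kernel_def using assms(1)
    by (intro divide_left_mono mult_pos_pos) (auto intro: add_nonneg_pos)
qed

lemma poisson_kernel_le: "b > 0 \<Longrightarrow> poisson_kernel b x \<le> 1 / b"
  using poisson_kernel_antimono[of b 0 x] by (simp add: poisson_kernel_def power2_eq_square)

lemma has_real_derivative_arctan_div:
  assumes "b > 0"
  shows "((\<lambda>x. arctan (x / b)) has_real_derivative poisson_kernel b x) (at x)"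
proof -
  have "((\<lambda>x. arctan (x / b)) has_real_derivative 1 / (1 + (x / b)\<^sup>2) * (1 / b)) (at x)"
    using assms by (auto intro!: derivative_eq_intros simp: field_simps)
  also have "1 / (1 + (x / b)\<^sup>2) * (1 / b) = poisson_kernel b x"
    using assms unfolding poisson_kernel_def by (simp add: field_simps power2_eq_square)
  finally show ?thesis .
qed

lemma poisson_kernel_le_arctan_diff:
  assumes "b > 0" "k \<ge> 1"
  shows "poisson_kernel b k \<le> arctan (k / b) - arctan ((k - 1) / b)"
proof -
  obtain z where z: "k - 1 < z" "z < k"
    and mvt: "arctan (k / b) - arctan ((k - 1) / b) = (k - (k - 1)) * poisson_kernel b z"
    using MVT2[of "k - 1" k "\<lambda>x. arctan (x / b)" "poisson_kernel b"]
      has_real_derivative_arctan_div[OF assms(1)] by auto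
  have "poisson_kernel b k \<le> poisson_kernel b z"
    using z assms by (intro poisson_kernel_antimono) auto
  then show ?thesis
    using mvt by simp
qed

lemma sum_poisson_kernel_atMost:
  assumes "b > 0"
  shows "(\<Sum>i\<le>N. poisson_kernel b (real i)) \<le> 1 / b + pi / 2"
proof -
  have "(\<Sum>i\<le>N. poisson_kernel b (real i))
      = poisson_kernel b 0 + (\<Sum>i<N. poisson_kernel b (real (Suc i)))"
    by (subst sum.atMost_shift) simp
  also have "\<dots> \<le> 1 / b + (\<Sum>i<N. arctan (real (Suc i) / b) - arctan (real i / b))"
  proof (intro add_mono sum_mono)
    fix i
    show "poisson_kernel b (real (Suc i)) \<le> arctan (real (Suc i) / b) - arctan (real i / b)"
      using poisson_kernel_le_arctan_diff[OF assms, of "real (Suc i)"] by simp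
  qed (rule poisson_kernel_le[OF assms])
  also have "(\<Sum>i<N. arctan (real (Suc i) / b) - arctan (real i / b)) = arctan (real N / b)"
    by (subst sum_lessThan_telescope) simp
  also have "\<dots> \<le> pi / 2"
    using arctan_ubound less_imp_le by blast
  finally show ?thesis by simp
qed

lemma sum_poisson_kernel_inj_le:
  assumes "b > 0" "finite F" "inj_on g F"
  shows "(\<Sum>n\<in>F. poisson_kernel b (real (g n))) \<le> 1 / b + pi / 2"
proof -
  obtain N where "g ` F \<subseteq> {..N}"
    using assms(2) finite_nat_set_iff_bounded_le by (metis atMost_iff finite_imageI subsetI)
  have "(\<Sum>n\<in>F. poisson_kernel b (real (g n))) = (\<Sum>i\<in>g ` F. poisson_kernel b (real i))"
    by (simp add: sum.reindex[OF assms(3)])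
  also have "\<dots> \<le> (\<Sum>i\<le>N. poisson_kernel b (real i))"
    using \<open>g ` F \<subseteq> {..N}\<close> poisson_kernel_nonneg[OF assms(1)] by (intro sum_mono2) auto
  also have "\<dots> \<le> 1 / b + pi / 2"
    by (rule sum_poisson_kernel_atMost[OF assms(1)])
  finally show ?thesis .
qed

lemma ell_term_le:
  assumes "\<And>y. 0 \<le> y \<Longrightarrow> y \<le> 1 \<Longrightarrow> poisson_kernel b (y + real_of_int n + \<kappa>) \<le> c"
  shows "ell_term \<kappa> b n \<le> c"
  using assms unfolding ell_term_def poisson_kernel_def by (intro cSUP_least) auto

lemma ell_term_nonneg:
  assumes "b > 0"
  shows "ell_term \<kappa> b n \<ge> 0"
proof -
  have "bdd_above ((\<lambda>y. poisson_kernel b (y + real_of_int n + \<kappa>)) ` {0..1})"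
    using poisson_kernel_le[OF assms] by (intro bdd_aboveI2)
  then have "poisson_kernel b (0 + real_of_int n + \<kappa>) \<le> ell_term \<kappa> b n"
    unfolding ell_term_def poisson_kernel_def by (rule cSUP_upper[rotated]) simp
  then show ?thesis
    using poisson_kernel_nonneg[OF assms] order_trans by blast
qed

lemma ell_term_add_int: "ell_term (\<kappa> + real_of_int m) b n = ell_term \<kappa> b (n + m)"
  unfolding ell_term_def by (simp add: algebra_simps)

(* nat n + nat (-n - 2) is the distance from 0 to the interval [n, n + 2]. *)
lemma ell_term_le_dist:
  assumes "b > 0" "0 \<le> \<kappa>" "\<kappa> < 1"
  shows "ell_term \<kappa> b n \<le> poisson_kernel b (real (nat n + nat (- n - 2)))"
proof (rule ell_term_le)
  fix y :: real
  assume "0 \<le> y" "y \<le> 1"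
  then have "real (nat n + nat (- n - 2)) \<le> \<bar>y + real_of_int n + \<kappa>\<bar>"
    using assms(2,3) by (cases "n \<ge> 0"; cases "n \<le> -2") auto
  then show "poisson_kernel b (y + real_of_int n + \<kappa>) \<le> poisson_kernel b (real (nat n + nat (- n - 2)))"
    using assms(1) by (intro poisson_kernel_antimono) auto
qed

lemma sum_ell_term_unit_le:
  assumes "b > 0" "0 \<le> \<kappa>" "\<kappa> < 1" "finite F"
  shows "sum (ell_term \<kappa> b) F \<le> pi + 3 / b"
proof -
  define d where "d n = poisson_kernel b (real (nat n + nat (- n - 2)))" for n
  have inj_nonneg: "inj_on nat (F \<inter> {0..})"
    by (rule inj_onI) auto
  have inj_le_minus_2: "inj_on (\<lambda>n. nat (- n - 2)) (F \<inter> {..-2})"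
    by (rule inj_onI) auto
  have "sum (ell_term \<kappa> b) F \<le> sum d F"
    unfolding d_def using ell_term_le_dist[OF assms(1-3)] by (intro sum_mono)
  also have "\<dots> = sum d (F \<inter> {0..}) + sum d (F \<inter> {-1}) + sum d (F \<inter> {..-2})"
    using assms(4) by (subst sum.union_disjoint[symmetric] | force intro: sum.cong)+
  also have "sum d (F \<inter> {0..}) \<le> 1 / b + pi / 2"
    using sum_poisson_kernel_inj_le[OF assms(1) _ inj_nonneg] assms(4) unfolding d_def by simp
  also have "sum d (F \<inter> {-1}) \<le> 1 / b"
    using assms(1) poisson_kernel_le[OF assms(1)] by (cases "-1 \<in> F") (auto simp: d_def)
  also have "sum d (F \<inter> {..-2}) \<le> 1 / b + pi / 2"
    using sum_poisson_kernel_inj_le[OF assms(1) _ inj_le_minus_2] assms(4) unfolding d_def by simp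
  finally show ?thesis by simp
qed

lemma sum_ell_term_le:
  assumes "b > 0" "finite F"
  shows "sum (ell_term \<kappa> b) F \<le> pi + 3 / b"
proof -
  have shift: "ell_term \<kappa> b = ell_term (frac \<kappa>) b \<circ> (\<lambda>n. n + \<lfloor>\<kappa>\<rfloor>)"
    using ell_term_add_int[of "frac \<kappa>" "\<lfloor>\<kappa>\<rfloor>" b] by (auto simp: frac_def)
  have "sum (ell_term \<kappa> b) F = sum (ell_term (frac \<kappa>) b) ((\<lambda>n. n + \<lfloor>\<kappa>\<rfloor>) ` F)"
    unfolding shift by (rule sum.reindex[symmetric]) simp
  also have "\<dots> \<le> pi + 3 / b"
    using assms by (intro sum_ell_term_unit_le frac_lt_1) auto
  finally show ?thesis .
qed

lemma ell_term_summable_on: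
  assumes "b > 0"
  shows "ell_term \<kappa> b summable_on UNIV"
  using ell_term_nonneg[OF assms] sum_ell_term_le[OF assms]
  by (intro nonneg_bdd_above_summable_on bdd_aboveI2) auto

lemma ell_le:
  assumes "b > 0"
  shows "ell \<kappa> b \<le> pi * (1 + 1 / b)"
proof -
  have "ell \<kappa> b \<le> pi + 3 / b"
    unfolding ell_def using ell_term_summable_on[OF assms] sum_ell_term_le[OF assms]
    by (intro infsum_le_finite_sums) auto
  also have "3 / b \<le> pi / b"
    using pi_gt3 assms by (intro divide_right_mono) auto
  finally show ?thesis by (simp add: algebra_simps)
qed

lemma ell_add_int: "ell (\<kappa> + real_of_int m) b = ell \<kappa> b"
proof -
  have "bij_betw (\<lambda>n. n + m) UNIV UNIV"
    by (rule bij_betwI[where g = "\<lambda>n. n - m"]) auto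
  then show ?thesis
    unfolding ell_def ell_term_add_int by (rule infsum_reindex_bij_betw)
qed

theorem lemma3p2:
  fixes b :: real
  assumes "b > 0"
  shows "(\<forall>\<kappa>. ell_term \<kappa> b summable_on (UNIV::int set))
    \<and> (\<forall>\<kappa> (m::int). ell (\<kappa> + real_of_int m) b = ell \<kappa> b)
    \<and> bdd_above (range (\<lambda>\<kappa>. ell \<kappa> b))
    \<and> (SUP \<kappa>. ell \<kappa> b) \<le> pi * (1 + 1 / b)"
  using ell_term_summable_on[OF assms] ell_add_int ell_le[OF assms]
  by (auto intro!: bdd_aboveI2 cSUP_least)

end
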